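(* Let $(X,d_X)$ be a complete metric space. Let $\mathfrak{A}=\{A(t)\}_{t\in\mathbb{R}}$ be the pullback attractor of a process $U$ on $X$ and $\mathcal{A}$ the global attractor of a semigroup $S$ on $X$. Suppose that (i) for every family $\{x_t\}\subset X$ and $x_0\in X$ with $\lim_{t\to-\infty}d_X(x_t,x_0)=0$, $$\lim_{t\to-\infty} d_X\big(U(t,t-T,x_t),S(T,x_0)\big)=0\quad\text{for all } T>0;$$ (ii) $\mathfrak{A}$ is backwards compact, i.e. there is a compact set $K\subset X$ with $\bigcup_{t\leq 0}A(t)\subset K$. Then $\lim_{t\to-\infty}\operatorname{dist}\big(A(t),\mathcal{A}\big)=0$.
   Context: A process on $X$ is a map $U:\{(t,\tau)\in\mathbb{R}^2:t\geq\tau\}\times X\to X$ with $U(\tau,\tau,x)=x$ and $U(t,s,U(s,\tau,x))=U(t,\tau,x)$ for all $t\geq s\geq\tau$, $x\in X$ (no continuity is assumed). A pullback attractor of $U$ is a family $\mathfrak{A}=\{A(t)\}_{t\in\mathbb{R}}$ of nonempty compact subsets of $X$ which is invariant ($U(t,\tau,A(\tau))=A(t)$ for all $t\geq\tau$), pullback attracts every nonempty bounded set $D\subset X$ (i.e. $\lim_{s\to\infty}\operatorname{dist}(U(t,t-s,D),A(t))=0$ for every $t\in\mathbb{R}$), and is minimal among families with these properties. A semigroup on $X$ is a map $S:[0,\infty)\times X\to X$ with $S(0,x)=x$ and $S(t+s,x)=S(t,S(s,x))$; its global attractor $\mathcal{A}$ is a nonempty compact set with $S(t,\mathcal{A})=\mathcal{A}$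 for all $t\geq0$ that attracts every bounded set $D$: $\lim_{t\to\infty}\operatorname{dist}(S(t,D),\mathcal{A})=0$. Here $\operatorname{dist}(A,B)=\sup_{a\in A}\inf_{b\in B}d_X(a,b)$ is the Hausdorff semi-metric. *)

theory Defs
  imports "HOL-Analysis.Analysis" "HOL-Library.Extended_Real"
begin

text \<open>Hausdorff semi-distance dist(A,B) = sup over a in A of inf over b in B of d(a,b),
  valued in the extended reals so that unbounded sets give infinity.\<close>
definition hsemidist :: "'a::metric_space set \<Rightarrow> 'a set \<Rightarrow> ereal" where
  "hsemidist A B = (SUP a\<in>A. ereal (infdist a B))"

definition is_process :: "(real \<Rightarrow> real \<Rightarrow> 'a \<Rightarrow> 'a) \<Rightarrow> bool" where
  "is_process U \<longleftrightarrow> (\<forall>\<tau> x. U \<tau> \<tau> x = x) \<and>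
     (\<forall>t s \<tau> x. t \<ge> s \<and> s \<ge> \<tau> \<longrightarrow> U t s (U s \<tau> x) = U t \<tau> x)"

definition is_semigroup :: "(real \<Rightarrow> 'a \<Rightarrow> 'a) \<Rightarrow> bool" where
  "is_semigroup S \<longleftrightarrow> (\<forall>x. S 0 x = x) \<and>
     (\<forall>t s x. t \<ge> 0 \<and> s \<ge> 0 \<longrightarrow> S (t + s) x = S t (S s x))"

definition pullback_attracting_family ::
    "(real \<Rightarrow> real \<Rightarrow> 'a::metric_space \<Rightarrow> 'a) \<Rightarrow> (real \<Rightarrow> 'a set) \<Rightarrow> bool" where
  "pullback_attracting_family U A \<longleftrightarrow>
     (\<forall>t. A t \<noteq> {} \<and> compact (A t)) \<and>
     (\<forall>t \<tau>. t \<ge> \<tau> \<longrightarrow> U t \<tau> ` A \<tau> = A t) \<and>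
     (\<forall>D t. D \<noteq> {} \<and> bounded D \<longrightarrow>
        ((\<lambda>s. hsemidist (U t (t - s) ` D) (A t)) \<longlongrightarrow> 0) at_top)"

definition pullback_attractor ::
    "(real \<Rightarrow> real \<Rightarrow> 'a::metric_space \<Rightarrow> 'a) \<Rightarrow> (real \<Rightarrow> 'a set) \<Rightarrow> bool" where
  "pullback_attractor U A \<longleftrightarrow> is_process U \<and> pullback_attracting_family U A \<and>
     (\<forall>B. pullback_attracting_family U B \<and> (\<forall>t. B t \<subseteq> A t) \<longrightarrow> B = A)"

definition global_attractor ::
    "(real \<Rightarrow> 'a::metric_space \<Rightarrow> 'a) \<Rightarrow> 'a set \<Rightarrow> bool" where
  "global_attractor S AA \<longleftrightarrow> is_semigroup S \<and> AA \<noteq> {} \<and> compact AA \<and>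
     (\<forall>t\<ge>0. S t ` AA = AA) \<and>
     (\<forall>D. D \<noteq> {} \<and> bounded D \<longrightarrow> ((\<lambda>t. hsemidist (S t ` D) AA) \<longlongrightarrow> 0) at_top)"

end

theory Submission
  imports Defs
begin

(* If A(t) did not approach the global attractor as t -> -infinity, there would be times
   s_n -> -infinity and points a_n in A(s_n) at distance at least e from it. Choose T so large
   that S(T) maps the compact set K into the e-neighbourhood of the global attractor. By
   invariance a_n = U(s_n, s_n - T, b_n) with b_n in A(s_n - T), a subset of K, so a subsequence
   of the b_n converges to some l in K. Interpolating the b_n by a function x_t -> l of
   continuous time, hypothesis (i) forces a_n -> S(T) l along that subsequence, although S(T) l
   is closer than e to the attractor. *)

lemma infdist_le_hsemidist: "a \<in> A \<Longrightarrow> ereal (infdist a B) \<le> hsemidist A B"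
  unfolding hsemidist_def by (rule SUP_upper)

lemma hsemidist_le: "(\<And>a. a \<in> A \<Longrightarrow> infdist a B \<le> r) \<Longrightarrow> hsemidist A B \<le> ereal r"
  unfolding hsemidist_def by (rule SUP_least) simp

lemma hsemidist_nonneg:
  assumes "A \<noteq> {}"
  shows "0 \<le> hsemidist A B"
proof -
  obtain a where "a \<in> A" using assms by blast
  have "0 \<le> ereal (infdist a B)" by (simp add: infdist_nonneg)
  also have "\<dots> \<le> hsemidist A B" using \<open>a \<in> A\<close> by (rule infdist_le_hsemidist)
  finally show ?thesis .
qed

lemma tendsto_hsemidist_0_iff:
  assumes "\<And>t. A t \<noteq> {}"
  shows "((\<lambda>t. hsemidist (A t) B) \<longlongrightarrow> 0) F \<longleftrightarrow>
         (\<forall>e>0. eventually (\<lambda>t. \<forall>a\<in>A t. infdist a B < e) F)"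
proof
  assume lim: "((\<lambda>t. hsemidist (A t) B) \<longlongrightarrow> 0) F"
  show "\<forall>e>0. eventually (\<lambda>t. \<forall>a\<in>A t. infdist a B < e) F"
  proof (intro allI impI)
    fix e :: real assume "e > 0"
    with lim have "eventually (\<lambda>t. hsemidist (A t) B < ereal e) F"
      by (intro order_tendstoD(2)) auto
    then show "eventually (\<lambda>t. \<forall>a\<in>A t. infdist a B < e) F"
    proof eventually_elim
      case (elim t)
      show ?case
      proof
        fix a assume "a \<in> A t"
        then have "ereal (infdist a B) < ereal e"
          using infdist_le_hsemidist elim by (blast intro: le_less_trans)
        then show "infdist a B < e" by simp
      qed
    qed
  qed
next
  assume small: "\<forall>e>0. eventually (\<lambda>t. \<forall>a\<in>A t. infdist a B < e) F"
  show "((\<lambda>t. hsemidist (A t) B) \<longlongrightarrow> 0) F"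
  proof (rule order_tendstoI)
    fix y :: ereal assume "y < 0"
    then have "y < hsemidist (A t) B" for t
      using hsemidist_nonneg[OF assms] by (rule less_le_trans)
    then show "eventually (\<lambda>t. y < hsemidist (A t) B) F"
      by (simp add: always_eventually)
  next
    fix y :: ereal assume "0 < y"
    then obtain e where e: "0 < ereal e" "ereal e < y" using ereal_dense2 by blast
    from small e(1) have "eventually (\<lambda>t. \<forall>a\<in>A t. infdist a B < e) F" by simp
    then show "eventually (\<lambda>t. hsemidist (A t) B < y) F"
    proof eventually_elim
      case (elim t)
      then have "hsemidist (A t) B \<le> ereal e"
        by (intro hsemidist_le) (simp add: less_imp_le)
      then show ?case using e(2) by (rule le_less_trans)
    qed
  qed
qed

lemma global_attractor_absorbs_compact:
  assumes "global_attractor S AA" "compact K" "K \<noteq> {}" "e > 0"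
  obtains T where "T > 0" "\<And>b. b \<in> K \<Longrightarrow> infdist (S T b) AA < e"
proof -
  have "((\<lambda>t. hsemidist (S t ` K) AA) \<longlongrightarrow> 0) at_top"
    using assms(1-3) compact_imp_bounded unfolding global_attractor_def by blast
  then have "eventually (\<lambda>t. \<forall>a\<in>S t ` K. infdist a AA < e) at_top"
    using tendsto_hsemidist_0_iff[of "\<lambda>t. S t ` K"] assms(3,4) by blast
  then obtain N where "\<And>t. t \<ge> N \<Longrightarrow> \<forall>a\<in>S t ` K. infdist a AA < e"
    by (auto simp: eventually_at_top_linorder)
  then show thesis
    by (intro that[of "max N 1"]) auto
qed

lemma obtain_inj_sequence_at_bot:
  fixes P :: "real \<Rightarrow> bool"
  assumes "\<not> eventually P at_bot"
  obtains s :: "nat \<Rightarrow> real"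
  where "inj s" "filterlim s at_bot sequentially" "\<And>n. s n \<le> 0" "\<And>n. \<not> P (s n)"
proof -
  from assms have "\<forall>M. \<exists>t\<le>M. \<not> P t"
    by (auto simp: eventually_at_bot_linorder)
  then obtain f where f: "\<And>M. f M \<le> M \<and> \<not> P (f M)" by metis
  define s where "s = rec_nat (f 0) (\<lambda>n t. f (min (t - 1) (- real (Suc n))))"
  have s_0: "s 0 = f 0" and s_Suc: "s (Suc n) = f (min (s n - 1) (- real (Suc n)))" for n
    unfolding s_def by simp_all
  have s_le: "s n \<le> - real n" for n
  proof (cases n)
    case 0
    then show ?thesis using f[of 0] by (simp add: s_0)
  next
    case (Suc m)
    then show ?thesis using f[of "min (s m - 1) (- real (Suc m))"] by (simp add: s_Suc)
  qed
  have "s (Suc n) < s n" for n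
    using f[of "min (s n - 1) (- real (Suc n))"] by (simp add: s_Suc)
  then have "strict_mono (\<lambda>n. - s n)"
    by (simp add: strict_mono_Suc_iff)
  then have "inj s"
    using strict_mono_imp_inj_on[of "\<lambda>n. - s n" UNIV] by (auto simp: inj_on_def)
  moreover have "filterlim s at_bot sequentially"
    unfolding filterlim_at_bot
  proof
    fix Z :: real
    obtain n0 :: nat where "- Z \<le> real n0" using real_arch_simple by blast
    then show "eventually (\<lambda>n. s n \<le> Z) sequentially"
    proof (intro eventually_sequentiallyI)
      fix n assume "n0 \<le> n"
      then have "real n0 \<le> real n" by simp
      with \<open>- Z \<le> real n0\<close> s_le[of n] show "s n \<le> Z" by linarith
    qed
  qed
  moreover have "s n \<le> 0" for n
    using s_le[of n] by simp
  moreover have "\<not> P (s n)" for n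
    by (cases n) (metis f s_0, metis f s_Suc)
  ultimately show thesis by (rule that)
qed

lemma interpolate_sequence_at_bot:
  fixes s :: "nat \<Rightarrow> 'b::{linorder,no_bot}"
  assumes "inj s" "b \<longlonglongrightarrow> l"
  obtains x where "(x \<longlongrightarrow> l) at_bot" "\<And>n. x (s n) = b n"
proof
  define x where "x t = (if t \<in> range s then b (inv s t) else l)" for t
  show "x (s n) = b n" for n
    unfolding x_def using assms(1) by simp
  show "(x \<longlongrightarrow> l) at_bot"
  proof (rule topological_tendstoI)
    fix V assume "open V" "l \<in> V"
    with assms(2) obtain M where M: "\<And>n. n \<ge> M \<Longrightarrow> b n \<in> V"
      by (auto simp: tendsto_def eventually_sequentially)
    have "eventually (\<lambda>t. \<forall>m\<in>{..<M}. t \<noteq> s m) at_bot"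
      by (intro eventually_ball_finite) auto
    then show "eventually (\<lambda>t. x t \<in> V) at_bot"
    proof eventually_elim
      case (elim t)
      then show "x t \<in> V"
        using M \<open>l \<in> V\<close> assms(1) unfolding x_def by (auto intro!: M leI)
    qed
  qed
qed

lemma pullback_preimages_subseq_converge:
  fixes U :: "real \<Rightarrow> real \<Rightarrow> 'a::metric_space \<Rightarrow> 'a" and s :: "nat \<Rightarrow> real"
  assumes inv: "\<And>t. A t \<subseteq> U t (t - T) ` A (t - T)"
    and K: "compact K" "\<And>t. t \<le> 0 \<Longrightarrow> A t \<subseteq> K"
    and conv: "\<And>xt x0. (xt \<longlongrightarrow> x0) at_bot \<Longrightarrow>
                 ((\<lambda>t. U t (t - T) (xt t)) \<longlongrightarrow> S T x0) at_bot"
    and "T \<ge> 0"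
    and s: "inj s" "filterlim s at_bot sequentially" "\<And>n. s n \<le> 0"
    and a: "\<And>n. a n \<in> A (s n)"
  obtains r l where "strict_mono r" "l \<in> K" "(a \<circ> r) \<longlonglongrightarrow> S T l"
proof -
  have "a n \<in> U (s n) (s n - T) ` A (s n - T)" for n
    using inv a by (rule subsetD)
  then have "\<forall>n. \<exists>y\<in>A (s n - T). a n = U (s n) (s n - T) y"
    by (simp add: image_iff)
  then obtain b where b: "\<And>n. b n \<in> A (s n - T)" "\<And>n. U (s n) (s n - T) (b n) = a n"
    by metis
  have "b n \<in> K" for n
    using K(2)[of "s n - T"] b(1) s(3)[of n] \<open>T \<ge> 0\<close> by auto
  then obtain r l where r: "strict_mono r" and l: "l \<in> K" "(b \<circ> r) \<longlonglongrightarrow> l"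
    using K(1) unfolding compact_def by meson
  have "inj (s \<circ> r)"
    using s(1) strict_mono_imp_inj_on[OF r] by (simp add: inj_compose)
  then obtain xt where xt: "(xt \<longlongrightarrow> l) at_bot" "\<And>n. xt (s (r n)) = b (r n)"
    using interpolate_sequence_at_bot[of "s \<circ> r" "b \<circ> r" l] l(2) by auto
  have "filterlim (\<lambda>n. s (r n)) at_bot sequentially"
    using filterlim_compose[OF s(2) filterlim_subseq[OF r]] by simp
  from filterlim_compose[OF conv[OF xt(1)] this]
  have "(\<lambda>n. U (s (r n)) (s (r n) - T) (xt (s (r n)))) \<longlonglongrightarrow> S T l" .
  then have "(a \<circ> r) \<longlonglongrightarrow> S T l"
    by (simp add: xt(2) b(2) o_def)
  with r l(1) show thesis by (rule that)
qed

lemma pullback_eventually_near: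
  fixes U :: "real \<Rightarrow> real \<Rightarrow> 'a::metric_space \<Rightarrow> 'a"
  assumes inv: "\<And>t. A t \<subseteq> U t (t - T) ` A (t - T)"
    and K: "compact K" "\<And>t. t \<le> 0 \<Longrightarrow> A t \<subseteq> K"
    and conv: "\<And>xt x0. (xt \<longlongrightarrow> x0) at_bot \<Longrightarrow>
                 ((\<lambda>t. U t (t - T) (xt t)) \<longlongrightarrow> S T x0) at_bot"
    and "T \<ge> 0"
    and near: "\<And>b. b \<in> K \<Longrightarrow> infdist (S T b) C < e"
  shows "eventually (\<lambda>t. \<forall>a\<in>A t. infdist a C < e) at_bot"
proof (rule ccontr)
  assume "\<not> ?thesis"
  then obtain s where s: "inj s" "filterlim s at_bot sequentially" "\<And>n. s n \<le> 0"
    and "\<And>n. \<not> (\<forall>a\<in>A (s n). infdist a C < e)"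
    by (rule obtain_inj_sequence_at_bot) blast
  then obtain a where a: "\<And>n. a n \<in> A (s n)" "\<And>n. infdist (a n) C \<ge> e"
    by (metis not_less)
  obtain r l where "l \<in> K" "(a \<circ> r) \<longlonglongrightarrow> S T l"
    using pullback_preimages_subseq_converge[where S = S and T = T and U = U,
            OF inv K conv \<open>T \<ge> 0\<close> s a(1)] by blast
  then have "(\<lambda>n. infdist (a (r n)) C) \<longlonglongrightarrow> infdist (S T l) C"
    by (intro tendsto_infdist) (simp add: o_def)
  moreover have "infdist (S T l) C < e"
    using near \<open>l \<in> K\<close> .
  ultimately have "eventually (\<lambda>n. infdist (a (r n)) C < e) sequentially"
    by (rule order_tendstoD(2))
  then show False
    using a(2) by (auto simp: eventually_sequentially not_less[symmetric])
qed

theorem theorem2p3: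
  fixes U :: "real \<Rightarrow> real \<Rightarrow> 'a::complete_space \<Rightarrow> 'a"
    and S :: "real \<Rightarrow> 'a \<Rightarrow> 'a"
    and A :: "real \<Rightarrow> 'a set"
    and AA :: "'a set"
  assumes "pullback_attractor U A"
    and "global_attractor S AA"
    and "\<And>xt x0 T. (xt \<longlongrightarrow> x0) at_bot \<Longrightarrow> T > 0 \<Longrightarrow>
           ((\<lambda>t. U t (t - T) (xt t)) \<longlongrightarrow> S T x0) at_bot"
    and "\<exists>K. compact K \<and> (\<Union>t\<in>{..0}. A t) \<subseteq> K"
  shows "((\<lambda>t. hsemidist (A t) AA) \<longlongrightarrow> 0) at_bot"
proof -
  have ne: "\<And>t. A t \<noteq> {}" and inv: "\<And>t \<tau>. \<tau> \<le> t \<Longrightarrow> U t \<tau> ` A \<tau> = A t"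
    using assms(1) unfolding pullback_attractor_def pullback_attracting_family_def by auto
  obtain K where K: "compact K" "\<And>t. t \<le> 0 \<Longrightarrow> A t \<subseteq> K"
    using assms(4) by blast
  show ?thesis
    unfolding tendsto_hsemidist_0_iff[OF ne]
  proof (intro allI impI)
    fix e :: real assume "e > 0"
    obtain T where T: "T > 0" "\<And>b. b \<in> K \<Longrightarrow> infdist (S T b) AA < e"
      using global_attractor_absorbs_compact[OF assms(2) K(1) _ \<open>e > 0\<close>] ne K(2)[of 0] by blast
    have "A t \<subseteq> U t (t - T) ` A (t - T)" for t
      using inv[of "t - T" t] T(1) by simp
    from this K assms(3)[OF _ T(1)] less_imp_le[OF T(1)] T(2)
    show "eventually (\<lambda>t. \<forall>a\<in>A t. infdist a AA < e) at_bot"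
      by (rule pullback_eventually_near)
  qed
qed

end
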